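(* Let $d$ be a positive integer and $a(z)=\sum_{i\ge0}a_iz^i\in\mathbb{R}[[z]]$ a rational series satisfying (P1), (P2$_d$) and (P3$_d$). Then $$\lim_{z\to1}a(z)(1-z)^d=\lim_{k\to\infty}\frac{(d-1)!}{(d+k-1)!}\frac{\partial^ka}{\partial z^k}(0),$$ the limit on the right existing.
   Context: A rational series is the power series expansion at $z=0$ of a rational function that is regular at $0$; the left-hand limit is taken for the rational function. (P1): the rational function has poles only at roots of unity. (P2$_m$): $z=1$ is a pole of order exactly $m$. (P3$_m$): every pole other than $z=1$ has order less than $m$. *)

theory Defs
  imports "HOL-Analysis.Analysis" "HOL-Computational_Algebra.Computational_Algebra"
begin

text \<open>A rational function is represented as a quotient p/q of real polynomials.
  Its poles are taken over the complex numbers.  The order of the pole of p/q at w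
  is the root multiplicity of w in q minus that in p (0 if this is not positive),
  which is independent of the chosen representation.\<close>

definition cpoly :: "real poly \<Rightarrow> complex poly" where
  "cpoly p = map_poly complex_of_real p"

definition pole_order :: "real poly \<Rightarrow> real poly \<Rightarrow> complex \<Rightarrow> nat" where
  "pole_order p q w = order w (cpoly q) - order w (cpoly p)"

definition is_pole_rat :: "real poly \<Rightarrow> real poly \<Rightarrow> complex \<Rightarrow> bool" where
  "is_pole_rat p q w \<longleftrightarrow> pole_order p q w > 0"

definition P1 :: "real poly \<Rightarrow> real poly \<Rightarrow> bool" where
  "P1 p q \<longleftrightarrow> (\<forall>w. is_pole_rat p q w \<longrightarrow> (\<exists>n>0. w ^ n = 1))"

definition P2 :: "nat \<Rightarrow> real poly \<Rightarrow> real poly \<Rightarrow> bool" where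
  "P2 m p q \<longleftrightarrow> is_pole_rat p q 1 \<and> pole_order p q 1 = m"

definition P3 :: "nat \<Rightarrow> real poly \<Rightarrow> real poly \<Rightarrow> bool" where
  "P3 m p q \<longleftrightarrow> (\<forall>w. w \<noteq> 1 \<and> is_pole_rat p q w \<longrightarrow> pole_order p q w < m)"

end

theory Submission
  imports Defs "HOL-Real_Asymp.Real_Asymp"
begin

text \<open>By (P1) all poles of p/q are N-th roots of unity for one N > 0. Write d = m + 1 and
  D(z) = (1 - z) (1 - z^N)^m. It vanishes to order d at 1 and to order at least m at every
  other N-th root of unity, so by (P2) and (P3) it cancels every pole: p D = q H for a real
  polynomial H (divisibility is checked root by root over \<complex>). Hence a = H / D, and 1 / D has
  the explicit coefficients binom(k div N + m, m), which grow like (k/N)^m / m!; so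
  the normalised derivatives (d-1)! a_k k! / (d+k-1)! tend to H(1) / N^m. On the other side
  p/q (1 - z)^d = H(z) / (1 + z + ... + z^(N-1))^m, which is continuous at 1 with the same
  value.\<close>

lemma coeff_cpoly [simp]: "coeff (cpoly p) n = complex_of_real (coeff p n)"
  unfolding cpoly_def by (simp add: coeff_map_poly)

lemma cpoly_add: "cpoly (p + q) = cpoly p + cpoly q"
  by (rule poly_eqI) simp

lemma cpoly_mult: "cpoly (p * q) = cpoly p * cpoly q"
  by (rule poly_eqI) (simp add: coeff_mult)

lemma cpoly_power: "cpoly (p ^ n) = cpoly p ^ n"
proof (induction n)
  case 0
  show ?case by (rule poly_eqI) simp
qed (simp add: cpoly_mult)

lemma cpoly_eq_0_iff [simp]: "cpoly p = 0 \<longleftrightarrow> p = 0"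
  unfolding cpoly_def by (simp add: map_poly_eq_0_iff)

lemma degree_cpoly [simp]: "degree (cpoly p) = degree p"
  unfolding cpoly_def by (simp add: degree_map_poly)

lemma order_power: "p \<noteq> 0 \<Longrightarrow> order a (p ^ n) = n * order a p"
  for p :: "'a::idom poly"
  by (induction n) (simp_all add: order_mult)

lemma order_le_imp_dvd:
  fixes p q :: "'a::alg_closed_field poly"
  assumes "q \<noteq> 0" and "\<And>w. order w q \<le> order w p"
  shows "q dvd p"
  using assms
proof (induction "degree q" arbitrary: p q rule: less_induct)
  case less
  show ?case
  proof (cases "p = 0 \<or> degree q = 0")
    case True
    then show ?thesis
      using less.prems(1) is_unit_iff_degree by (metis dvd_0_right unit_imp_dvd)
  next
    case False
    then obtain w where "poly q w = 0"
      using alg_closed_imp_poly_has_root by blast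
    then have "0 < order w p"
      using less.prems order_root by (metis gr0I le_zero_eq)
    then have "[:-w, 1:] dvd q" and "[:-w, 1:] dvd p"
      using \<open>poly q w = 0\<close> False order_root poly_eq_0_iff_dvd by blast+
    then obtain q' p' where q: "q = [:-w, 1:] * q'" and p: "p = [:-w, 1:] * p'"
      by (elim dvdE)
    have "q \<noteq> 0" "p \<noteq> 0" "q' \<noteq> 0"
      using q less.prems(1) False by auto
    have "degree q' < degree q"
      using \<open>q' \<noteq> 0\<close> unfolding q by (subst degree_mult_eq) auto
    moreover have "order v q' \<le> order v p'" for v
    proof -
      have "order v q = order v [:-w, 1:] + order v q'"
        using \<open>q \<noteq> 0\<close> unfolding q by (rule order_mult)
      moreover have "order v p = order v [:-w, 1:] + order v p'"
        using \<open>p \<noteq> 0\<close> unfolding p by (rule order_mult)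
      ultimately show ?thesis
        using less.prems(2)[of v] by simp
    qed
    ultimately have "q' dvd p'"
      using less.hyps \<open>q' \<noteq> 0\<close> by blast
    then show ?thesis
      unfolding q p by (rule mult_dvd_mono[OF dvd_refl])
  qed
qed

lemma dvd_of_cpoly_dvd:
  fixes p q :: "real poly"
  assumes "q \<noteq> 0" and "cpoly q dvd cpoly p"
  shows "q dvd p"
proof (rule ccontr)
  define r where "r = p mod q"
  assume "\<not> q dvd p"
  then have "r \<noteq> 0"
    by (simp add: r_def mod_eq_0_iff_dvd)
  have "cpoly p = cpoly q * cpoly (p div q) + cpoly r"
    unfolding r_def by (metis cpoly_add cpoly_mult div_mult_mod_eq mult.commute)
  then have "cpoly q dvd cpoly r"
    using assms(2) by (metis dvd_add_right_iff dvd_triv_left)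
  then have "degree q \<le> degree r"
    using \<open>r \<noteq> 0\<close> by (metis degree_cpoly cpoly_eq_0_iff dvd_imp_degree_le)
  moreover have "degree r < degree q"
    using \<open>r \<noteq> 0\<close> assms(1) by (simp add: r_def degree_mod_less')
  ultimately show False
    by simp
qed

lemma P1_common_exponent:
  assumes "P1 p q" and "q \<noteq> 0"
  obtains N where "N > 0" and "\<And>w. is_pole_rat p q w \<Longrightarrow> w ^ N = 1"
proof -
  have "{w. is_pole_rat p q w} \<subseteq> {w. poly (cpoly q) w = 0}"
    by (auto simp: is_pole_rat_def pole_order_def order_root)
  then have finite_poles: "finite {w. is_pole_rat p q w}"
    using poly_roots_finite[of "cpoly q"] assms(2) finite_subset by auto
  obtain n where n: "\<And>w. is_pole_rat p q w \<Longrightarrow> n w > 0 \<and> w ^ n w = 1"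
    using assms(1) unfolding P1_def by metis
  define N where "N = (\<Prod>w | is_pole_rat p q w. n w)"
  show ?thesis
  proof
    show "N > 0"
      using n by (auto simp: N_def intro!: prod_pos)
    fix w
    assume "is_pole_rat p q w"
    then have "n w dvd N"
      using finite_poles by (simp add: N_def dvd_prodI)
    then show "w ^ N = 1"
      using n[OF \<open>is_pole_rat p q w\<close>] by (auto elim!: dvdE simp: power_mult)
  qed
qed

lemma dvd_mult_if_pole_order_le:
  fixes p q D :: "real poly"
  assumes "p \<noteq> 0" and "q \<noteq> 0" and "D \<noteq> 0"
    and "\<And>w. pole_order p q w \<le> order w (cpoly D)"
  shows "q dvd p * D"
proof (rule dvd_of_cpoly_dvd[OF \<open>q \<noteq> 0\<close>])
  show "cpoly q dvd cpoly (p * D)"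
  proof (rule order_le_imp_dvd)
    show "cpoly q \<noteq> 0"
      using assms(2) by simp
    fix w
    have "order w (cpoly (p * D)) = order w (cpoly p) + order w (cpoly D)"
      using assms(1,3) by (simp add: cpoly_mult order_mult)
    then show "order w (cpoly q) \<le> order w (cpoly (p * D))"
      using assms(4)[of w] by (simp add: pole_order_def)
  qed
qed

definition denom_poly :: "nat \<Rightarrow> nat \<Rightarrow> 'a::comm_ring_1 poly" where
  "denom_poly N m = [:1, -1:] * (1 - monom 1 N) ^ m"

lemma poly_denom_poly: "poly (denom_poly N m) z = (1 - z) * (1 - z ^ N) ^ m"
  by (simp add: denom_poly_def poly_monom left_diff_distrib)

lemma denom_poly_nonzero:
  assumes "N > 0"
  shows "denom_poly N m \<noteq> (0 :: 'a::comm_ring_1 poly)"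
proof -
  have "poly (denom_poly N m) (0 :: 'a) = 1"
    using assms by (simp add: poly_denom_poly power_0_left)
  then show ?thesis
    by auto
qed

lemma cpoly_denom_poly: "cpoly (denom_poly N m) = denom_poly N m"
proof -
  have "cpoly [:1, -1:] = [:1, -1:]" and "cpoly (1 - monom 1 N) = 1 - monom 1 N"
    by (auto intro!: poly_eqI simp: coeff_pCons split: nat.split)
  then show ?thesis
    by (simp only: denom_poly_def cpoly_mult cpoly_power)
qed

lemma fps_of_poly_denom_poly:
  "fps_of_poly (denom_poly N m) = (1 - fps_X) * (1 - fps_X ^ N) ^ m"
proof -
  have "fps_of_poly [:1, -1:] = (1 - fps_X :: 'a::comm_ring_1 fps)"
    by (simp add: fps_of_poly_linear' fps_const_neg [symmetric])
  then show ?thesis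
    by (simp only: denom_poly_def fps_of_poly_mult fps_of_poly_power fps_of_poly_diff
        fps_of_poly_1 fps_of_poly_monom')
qed

lemma order_denom_poly:
  fixes w :: "'a::idom"
  assumes "N > 0" and "w ^ N = 1"
  shows "m + of_bool (w = 1) \<le> order w (denom_poly N m)"
proof -
  have "poly (1 - monom 1 N) (0 :: 'a) = 1"
    using assms(1) by (simp add: poly_monom power_0_left)
  then have "1 - monom 1 N \<noteq> (0 :: 'a poly)"
    by auto
  have "order w (denom_poly N m) = order w [:1, -1:] + order w ((1 - monom 1 N) ^ m)"
    using denom_poly_nonzero[OF assms(1), of m] unfolding denom_poly_def by (rule order_mult)
  also have "\<dots> = order w [:1, -1:] + m * order w (1 - monom 1 N)"
    using \<open>1 - monom 1 N \<noteq> 0\<close> by (simp add: order_power)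
  finally have order_eq:
      "order w (denom_poly N m) = order w [:1, -1:] + m * order w (1 - monom 1 N)" .
  have "1 \<le> order w (1 - monom 1 N)"
    using order_root[of "1 - monom 1 N" w] \<open>1 - monom 1 N \<noteq> 0\<close> assms(2)
    by (simp add: poly_monom)
  then have "m \<le> m * order w (1 - monom 1 N)"
    by simp
  moreover have "of_bool (w = 1) \<le> order w [:1, -1:]"
    using order_root[of "[:1, -1:]" w] by auto
  ultimately show ?thesis
    unfolding order_eq by linarith
qed

lemma pole_order_le_order_denom_poly:
  assumes "N > 0" and "\<And>w. is_pole_rat p q w \<Longrightarrow> w ^ N = 1"
    and "pole_order p q 1 \<le> Suc m" and "\<And>w. w \<noteq> 1 \<Longrightarrow> pole_order p q w \<le> m"
  shows "pole_order p q w \<le> order w (denom_poly N m)"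
proof (cases "is_pole_rat p q w")
  case True
  then have "pole_order p q w \<le> m + of_bool (w = 1)"
    using assms(3,4) by (cases "w = 1") auto
  also have "\<dots> \<le> order w (denom_poly N m)"
    using order_denom_poly[OF assms(1) assms(2)[OF True]] .
  finally show ?thesis .
qed (simp add: is_pole_rat_def)

definition binom_div_fps :: "nat \<Rightarrow> nat \<Rightarrow> 'a::comm_ring_1 fps" where
  "binom_div_fps N m = Abs_fps (\<lambda>k. of_nat ((k div N + m) choose m))"

lemma binom_div_fps_0_mult: "binom_div_fps N 0 * (1 - fps_X) = 1"
proof (rule fps_ext)
  fix k
  show "fps_nth (binom_div_fps N 0 * (1 - fps_X)) k = fps_nth (1 :: 'a::comm_ring_1 fps) k"
    by (cases k) (simp_all add: binom_div_fps_def right_diff_distrib)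
qed

lemma binom_div_fps_Suc_mult:
  assumes "N > 0"
  shows "binom_div_fps N (Suc m) * (1 - fps_X ^ N) = (binom_div_fps N m :: 'a::comm_ring_1 fps)"
proof (rule fps_ext)
  fix k
  let ?E = "binom_div_fps N (Suc m) :: 'a fps"
  have "fps_nth (?E * (1 - fps_X ^ N)) k
      = fps_nth ?E k - (if N \<le> k then fps_nth ?E (k - N) else 0)"
    by (simp add: right_diff_distrib fps_X_power_mult_right_nth not_less)
  also have "\<dots> = fps_nth (binom_div_fps N m) k"
  proof (cases "N \<le> k")
    case True
    define j where "j = (k - N) div N"
    have "k div N = Suc j"
      using True assms by (simp add: j_def le_div_geq)
    then show ?thesis
      using True by (simp add: binom_div_fps_def j_def)
  qed (simp add: binom_div_fps_def binomial_eq_0)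
  finally show "fps_nth (?E * (1 - fps_X ^ N)) k = fps_nth (binom_div_fps N m) k" .
qed

lemma binom_div_fps_mult_denom_poly:
  assumes "N > 0"
  shows "binom_div_fps N m * fps_of_poly (denom_poly N m) = (1 :: 'a::comm_ring_1 fps)"
proof (induction m)
  case 0
  show ?case
    using binom_div_fps_0_mult by (simp add: fps_of_poly_denom_poly)
next
  case (Suc m)
  have "binom_div_fps N (Suc m) * fps_of_poly (denom_poly N (Suc m))
      = binom_div_fps N (Suc m) * (1 - fps_X ^ N) * fps_of_poly (denom_poly N m :: 'a poly)"
    by (simp add: fps_of_poly_denom_poly mult_ac)
  then show ?case
    using Suc by (simp add: binom_div_fps_Suc_mult[OF assms])
qed

lemma fps_of_poly_divide_eq_mult:
  fixes p q D H :: "'a::field poly"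
  assumes "q \<noteq> 0" and "p * D = q * H" and "E * fps_of_poly D = 1"
  shows "fps_of_poly p / fps_of_poly q = fps_of_poly H * E"
proof -
  have "fps_of_poly p = fps_of_poly (p * D) * E"
    using assms(3) by (simp add: fps_of_poly_mult mult_ac)
  also have "\<dots> = fps_of_poly q * (fps_of_poly H * E)"
    using assms(2) by (simp add: fps_of_poly_mult mult_ac)
  finally show ?thesis
    using assms(1) by (simp add: fps_of_poly_eq_iff)
qed

lemma coeff_mult_binom_div_fps:
  fixes H :: "'a::comm_ring_1 poly"
  assumes "degree H \<le> k"
  shows "fps_nth (fps_of_poly H * binom_div_fps N m) k
    = (\<Sum>i\<le>degree H. coeff H i * of_nat (((k - i) div N + m) choose m))"
proof -
  have "fps_nth (fps_of_poly H * binom_div_fps N m) k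
      = (\<Sum>i\<le>k. coeff H i * of_nat (((k - i) div N + m) choose m))"
    by (simp add: fps_mult_nth binom_div_fps_def atLeast0AtMost)
  also have "\<dots> = (\<Sum>i\<le>degree H. coeff H i * of_nat (((k - i) div N + m) choose m))"
    using assms by (intro sum.mono_neutral_right) (auto simp: coeff_eq_0)
  finally show ?thesis .
qed

lemma div_ratio_tendsto:
  assumes "N > 0" and "c > 0"
  shows "(\<lambda>k. (real ((k - i) div N) + c) / (real k + c)) \<longlonglongrightarrow> 1 / real N"
proof (rule tendsto_sandwich)
  have floor_eq: "real ((k - i) div N) = \<lfloor>real (k - i) / real N\<rfloor>" for k
    by (metis floor_divide_of_nat_eq of_int_of_nat_eq)
  have bounds: "(real k - real i) / real N - 1 \<le> real ((k - i) div N)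
      \<and> real ((k - i) div N) \<le> real k / real N" for k
  proof -
    have "(real k - real i) / real N \<le> real (k - i) / real N"
      and "real (k - i) / real N \<le> real k / real N"
      using assms(1) by (auto intro: divide_right_mono)
    then show ?thesis
      unfolding floor_eq
      using real_of_int_floor_ge_diff_one[of "real (k - i) / real N"]
        of_int_floor_le[of "real (k - i) / real N"] by linarith
  qed
  show "\<forall>\<^sub>F k in sequentially.
      ((real k - real i) / real N - 1 + c) / (real k + c)
        \<le> (real ((k - i) div N) + c) / (real k + c)"
    and "\<forall>\<^sub>F k in sequentially.
      (real ((k - i) div N) + c) / (real k + c) \<le> (real k / real N + c) / (real k + c)"
    using bounds assms(2) by (intro always_eventually allI divide_right_mono; simp)+
  show "(\<lambda>k. ((real k - real i) / real N - 1 + c) / (real k + c)) \<longlonglongrightarrow> 1 / real N"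
    using assms by (real_asymp simp: divide_inverse)
  show "(\<lambda>k. (real k / real N + c) / (real k + c)) \<longlonglongrightarrow> 1 / real N"
    using assms by (real_asymp simp: divide_inverse)
qed

lemma binomial_ratio_tendsto:
  assumes "N > 0"
  shows "(\<lambda>k. real (((k - i) div N + m) choose m) / real ((k + m) choose m))
    \<longlonglongrightarrow> (1 / real N) ^ m"
proof -
  have binomial_eq: "real ((n + m) choose m) = pochhammer (real n + 1) m / fact m" for n
    by (simp add: binomial_gbinomial gbinomial_pochhammer')
  have "real (((k - i) div N + m) choose m) / real ((k + m) choose m)
      = (\<Prod>j<m. (real ((k - i) div N) + (1 + real j)) / (real k + (1 + real j)))" for k
    unfolding binomial_eq
    by (simp add: pochhammer_prod prod_dividef atLeast0LessThan add.assoc pochhammer_eq_0_iff)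
  moreover have "(\<lambda>k. \<Prod>j<m. (real ((k - i) div N) + (1 + real j)) / (real k + (1 + real j)))
      \<longlonglongrightarrow> (\<Prod>j<m. 1 / real N)"
    using assms by (intro tendsto_prod div_ratio_tendsto) auto
  ultimately show ?thesis
    by simp
qed

lemma scaled_higher_deriv_tendsto:
  fixes H :: "real poly"
  assumes "N > 0"
  shows "(\<lambda>k. fact m / fact (m + k) * fps_nth ((fps_deriv ^^ k) (fps_of_poly H * binom_div_fps N m)) 0)
    \<longlonglongrightarrow> poly H 1 / real N ^ m"
proof -
  let ?a = "fps_of_poly H * binom_div_fps N m"
  let ?ratio = "\<lambda>k i. real (((k - i) div N + m) choose m) / real ((k + m) choose m)"
  have "(\<lambda>k. \<Sum>i\<le>degree H. coeff H i * ?ratio k i)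
      \<longlonglongrightarrow> (\<Sum>i\<le>degree H. coeff H i * (1 / real N) ^ m)"
    using assms by (intro tendsto_sum tendsto_mult_left binomial_ratio_tendsto)
  also have "(\<Sum>i\<le>degree H. coeff H i * (1 / real N) ^ m) = poly H 1 / real N ^ m"
    by (simp add: poly_altdef sum_divide_distrib power_one_over)
  finally show ?thesis
  proof (rule Lim_transform_eventually, intro eventually_sequentiallyI)
    fix k
    assume "degree H \<le> k"
    have "real ((k + m) choose m) = fact (m + k) / (fact m * fact k)"
      by (simp add: binomial_fact add.commute)
    then have "fact m / fact (m + k) * fps_nth ((fps_deriv ^^ k) ?a) 0
        = fps_nth ?a k / real ((k + m) choose m)"
      by (simp add: fps_0th_higher_deriv)
    also have "\<dots> = (\<Sum>i\<le>degree H. coeff H i * ?ratio k i)"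
      using \<open>degree H \<le> k\<close> by (simp add: coeff_mult_binom_div_fps sum_divide_distrib)
    finally show "(\<Sum>i\<le>degree H. coeff H i * ?ratio k i)
        = fact m / fact (m + k) * fps_nth ((fps_deriv ^^ k) ?a) 0"
      by (rule sym)
  qed
qed

lemma tendsto_at_left_one_mult_power:
  fixes p q H :: "real poly"
  assumes "q \<noteq> 0" and "N > 0" and "p * denom_poly N m = q * H"
  shows "((\<lambda>z. poly p z / poly q z * (1 - z) ^ Suc m) \<longlongrightarrow> poly H 1 / real N ^ m)
    (at_left 1)"
proof -
  define g where "g z = poly H z / (\<Sum>j<N. z ^ j) ^ m" for z :: real
  have "isCont g 1"
    using assms(2) unfolding g_def by (intro continuous_intros) auto
  moreover have "g 1 = poly H 1 / real N ^ m"
    by (simp add: g_def)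
  ultimately have "(g \<longlongrightarrow> poly H 1 / real N ^ m) (at_left 1)"
    using filterlim_at_split isContD by metis
  moreover have "\<forall>\<^sub>F z in at_left 1. g z = poly p z / poly q z * (1 - z) ^ Suc m"
  proof -
    have "\<forall>\<^sub>F z in at (1::real). poly q z \<noteq> 0"
      using islimpt_iff_eventually[of 1 "{z. poly q z = 0}"]
        islimpt_finite[OF poly_roots_finite[OF assms(1)]] by simp
    then have "\<forall>\<^sub>F z in at_left (1::real). poly q z \<noteq> 0 \<and> 0 < z"
      using eventually_at_left_real[of 0 1] by (auto simp: eventually_at_split elim: eventually_elim2)
    then show ?thesis
    proof (rule eventually_mono)
      fix z :: real
      assume z: "poly q z \<noteq> 0 \<and> 0 < z"
      then have "(\<Sum>j<N. z ^ j) > 0"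
        using assms(2) by (intro sum_pos) auto
      moreover have "poly p z * ((1 - z) ^ Suc m * (\<Sum>j<N. z ^ j) ^ m) = poly q z * poly H z"
        using arg_cong[OF assms(3), of "\<lambda>f. poly f z"]
        by (simp add: poly_denom_poly one_diff_power_eq power_mult_distrib mult_ac)
      ultimately show "g z = poly p z / poly q z * (1 - z) ^ Suc m"
        using z by (simp add: g_def field_simps)
    qed
  qed
  ultimately show ?thesis
    by (rule Lim_transform_eventually)
qed

theorem lemma4p3:
  fixes d :: nat and p q :: "real poly" and a :: "real fps"
  assumes "d > 0"
    and "p \<noteq> 0" and "poly q 0 \<noteq> 0"
    and "a = fps_of_poly p / fps_of_poly q"
    and "P1 p q" and "P2 d p q" and "P3 d p q"
  shows "\<exists>L. ((\<lambda>z. poly p z / poly q z * (1 - z) ^ d) \<longlongrightarrow> L) (at_left 1) \<and>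
             (\<lambda>k. fact (d - 1) / fact (d + k - 1) * fps_nth ((fps_deriv ^^ k) a) 0)
               \<longlonglongrightarrow> L"
proof -
  obtain m where d: "d = Suc m"
    using \<open>d > 0\<close> gr0_implies_Suc by blast
  have "q \<noteq> 0"
    using \<open>poly q 0 \<noteq> 0\<close> by auto
  then obtain N where "N > 0" and poles: "\<And>w. is_pole_rat p q w \<Longrightarrow> w ^ N = 1"
    using P1_common_exponent \<open>P1 p q\<close> by blast
  have "pole_order p q w \<le> order w (denom_poly N m)" for w
    using \<open>P2 d p q\<close> \<open>P3 d p q\<close> unfolding P2_def P3_def d is_pole_rat_def
    by (intro pole_order_le_order_denom_poly[OF \<open>N > 0\<close> poles]) (auto simp: less_Suc_eq_le)
  then have "q dvd p * denom_poly N m"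
    using \<open>p \<noteq> 0\<close> \<open>q \<noteq> 0\<close> denom_poly_nonzero[OF \<open>N > 0\<close>]
    by (intro dvd_mult_if_pole_order_le) (simp_all add: cpoly_denom_poly)
  then obtain H where H: "p * denom_poly N m = q * H"
    by (elim dvdE)
  have "a = fps_of_poly H * binom_div_fps N m"
    unfolding \<open>a = fps_of_poly p / fps_of_poly q\<close>
    by (rule fps_of_poly_divide_eq_mult[OF \<open>q \<noteq> 0\<close> H binom_div_fps_mult_denom_poly[OF \<open>N > 0\<close>]])
  then show ?thesis
    using tendsto_at_left_one_mult_power[OF \<open>q \<noteq> 0\<close> \<open>N > 0\<close> H]
      scaled_higher_deriv_tendsto[OF \<open>N > 0\<close>, of m H]
    by (auto simp: d add.commute)
qed

end
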